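(* Let $(K,\mathrm{val})$ be a valued field whose residue class field $F$ has characteristic two, and assume every strict unit admits a square root in $K$. Let $A$ be a subring with $B\subseteq A\subseteq K$. Then every $x\in K^\times\setminus B^\times$ can be written as $x=u^2+v^2$ with $u,v\in K$ and $\mathrm{val}(u)=\mathrm{val}(v)=\min\{e,\mathrm{val}(x)\}$. Moreover, if $x\in A$, then $u$ and $v$ can be chosen in $A$.
   Context: Let $(G,\le)$ be a totally ordered abelian group written multiplicatively with identity $e$. Let $(K,\mathrm{val})$ be a valued field with surjective valuation $\mathrm{val}:K\to G\cup\{\infty\}$, valuation ring $B=\{x:\mathrm{val}(x)\ge e\}$ (so $B^\times=\{x:\mathrm{val}(x)=e\}$), residue map $\pi:B\to F$, residue field $F$. A strict unit is $x\in B^\times$ with $\pi(x)=1$. *)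

theory Defs
  imports Main
begin

text \<open>Valued field: the value group G is written additively (identity 0),
  the valuation is val :: K => G on nonzero elements; val 0 = infinity is
  modelled by treating 0 separately.\<close>

definition valuation :: "('k::field \<Rightarrow> 'g::linordered_ab_group_add) \<Rightarrow> bool" where
  "valuation val \<longleftrightarrow>
     (\<forall>x y. x \<noteq> 0 \<and> y \<noteq> 0 \<longrightarrow> val (x * y) = val x + val y) \<and>
     (\<forall>x y. x \<noteq> 0 \<and> y \<noteq> 0 \<and> x + y \<noteq> 0 \<longrightarrow> min (val x) (val y) \<le> val (x + y)) \<and>
     (\<forall>g. \<exists>x. x \<noteq> 0 \<and> val x = g)"

definition val_ring :: "('k::field \<Rightarrow> 'g::linordered_ab_group_add) \<Rightarrow> 'k set" where
  "val_ring val = {x. x = 0 \<or> 0 \<le> val x}"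

definition val_units :: "('k::field \<Rightarrow> 'g::linordered_ab_group_add) \<Rightarrow> 'k set" where
  "val_units val = {x. x \<noteq> 0 \<and> val x = 0}"

definition val_maxideal :: "('k::field \<Rightarrow> 'g::linordered_ab_group_add) \<Rightarrow> 'k set" where
  "val_maxideal val = {x. x = 0 \<or> 0 < val x}"

definition residue_map ::
  "('k::field \<Rightarrow> 'g::linordered_ab_group_add) \<Rightarrow> ('k \<Rightarrow> 'f::field) \<Rightarrow> bool" where
  "residue_map val \<pi> \<longleftrightarrow>
     \<pi> 1 = 1 \<and>
     (\<forall>x\<in>val_ring val. \<forall>y\<in>val_ring val. \<pi> (x + y) = \<pi> x + \<pi> y \<and> \<pi> (x * y) = \<pi> x * \<pi> y) \<and>
     \<pi> ` val_ring val = UNIV \<and>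
     (\<forall>x\<in>val_ring val. \<pi> x = 0 \<longleftrightarrow> x \<in> val_maxideal val)"

definition strict_unit ::
  "('k::field \<Rightarrow> 'g::linordered_ab_group_add) \<Rightarrow> ('k \<Rightarrow> 'f::field) \<Rightarrow> 'k \<Rightarrow> bool" where
  "strict_unit val \<pi> x \<longleftrightarrow> x \<in> val_units val \<and> \<pi> x = 1"

definition is_subring :: "'k::field set \<Rightarrow> bool" where
  "is_subring A \<longleftrightarrow> 0 \<in> A \<and> 1 \<in> A \<and>
     (\<forall>x\<in>A. \<forall>y\<in>A. x + y \<in> A \<and> x * y \<in> A \<and> - x \<in> A)"

end

theory Submission
  imports Defs
begin

text \<open>If \<open>val x > 0\<close> then \<open>1 + x\<close> is a strict unit, and so is \<open>-1\<close> because the residue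
  field has characteristic two; with square roots \<open>r\<close> of \<open>1 + x\<close> and \<open>i\<close> of \<open>-1\<close> we get
  \<open>x = r\<^sup>2 + i\<^sup>2\<close> with \<open>r, i\<close> units. If \<open>val x < 0\<close>, apply this to \<open>x\<inverse>\<close> and multiply
  by \<open>x\<^sup>2\<close>; the summands \<open>x r, x i\<close> then have value \<open>val x\<close> and lie in any ring
  \<open>A \<supseteq> B\<close> containing \<open>x\<close>.\<close>

locale valued_field =
  fixes val :: "'k::field \<Rightarrow> 'g::linordered_ab_group_add"
  assumes valuation: "valuation val"
begin

lemma val_mult: "x \<noteq> 0 \<Longrightarrow> y \<noteq> 0 \<Longrightarrow> val (x * y) = val x + val y"
  using valuation unfolding valuation_def by blast

lemma val_add_ge_min: "x \<noteq> 0 \<Longrightarrow> y \<noteq> 0 \<Longrightarrow> x + y \<noteq> 0 \<Longrightarrow> min (val x) (val y) \<le> val (x + y)"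
  using valuation unfolding valuation_def by blast

lemma val_one [simp]: "val 1 = 0"
  using val_mult[of 1 1] by simp

lemma val_minus_one [simp]: "val (- 1) = 0"
  using val_mult[of "- 1" "- 1"] by simp

lemma val_minus: "x \<noteq> 0 \<Longrightarrow> val (- x) = val x"
  using val_mult[of "- 1" x] by simp

lemma val_inverse: "x \<noteq> 0 \<Longrightarrow> val (inverse x) = - val x"
  using val_mult[of x "inverse x"] by (simp add: eq_neg_iff_add_eq_0 add.commute)

lemma square_in_val_units_iff: "r ^ 2 \<in> val_units val \<longleftrightarrow> r \<in> val_units val"
  using val_mult[of r r] by (auto simp: val_units_def power2_eq_square)

lemma one_plus_in_val_units:
  assumes "0 < val x"
  shows "1 + x \<in> val_units val"
proof (cases "x = 0")
  case False
  have "1 + x \<noteq> 0"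
    using assms val_minus_one by (metis add_eq_0_iff less_irrefl)
  moreover have "val (- x) = val x" using val_minus[OF False] .
  ultimately have "val (1 + x) \<le> 0" and "0 \<le> val (1 + x)"
    using val_add_ge_min[of "1 + x" "- x"] val_add_ge_min[of 1 x] False assms
    by (auto simp: min_def split: if_splits)
  with \<open>1 + x \<noteq> 0\<close> show ?thesis unfolding val_units_def by simp
qed (simp add: val_units_def)

end

locale residue_field = valued_field val for val :: "'k::field \<Rightarrow> 'g::linordered_ab_group_add" +
  fixes \<pi> :: "'k \<Rightarrow> 'f::field"
  assumes residue_map: "residue_map val \<pi>"
begin

lemma residue_one: "\<pi> 1 = 1"
  using residue_map unfolding residue_map_def by blast

lemma residue_add: "x \<in> val_ring val \<Longrightarrow> y \<in> val_ring val \<Longrightarrow> \<pi> (x + y) = \<pi> x + \<pi> y"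
  using residue_map unfolding residue_map_def by blast

lemma residue_eq_zero_iff: "x \<in> val_ring val \<Longrightarrow> \<pi> x = 0 \<longleftrightarrow> x \<in> val_maxideal val"
  using residue_map unfolding residue_map_def by blast

lemma residue_minus_one:
  assumes "CHAR('f) = 2"
  shows "\<pi> (- 1) = 1"
proof -
  have B: "1 \<in> val_ring val" "- 1 \<in> val_ring val" unfolding val_ring_def by simp_all
  have "\<pi> (1 + - 1) = 0" using residue_eq_zero_iff[of 0] unfolding val_ring_def val_maxideal_def by simp
  then have "\<pi> (- 1) = - 1" using residue_add[OF B] residue_one by (simp add: eq_neg_iff_add_eq_0 add.commute)
  moreover have "(1::'f) + 1 = 0" using of_nat_CHAR[where 'a='f] assms by simp
  ultimately show ?thesis by (metis add_eq_0_iff)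
qed

lemma strict_unit_minus_one: "CHAR('f) = 2 \<Longrightarrow> strict_unit val \<pi> (- 1)"
  using residue_minus_one unfolding strict_unit_def val_units_def by simp

lemma strict_unit_one_plus:
  assumes "0 < val x"
  shows "strict_unit val \<pi> (1 + x)"
proof -
  have B: "1 \<in> val_ring val" "x \<in> val_ring val" using assms unfolding val_ring_def by auto
  have "\<pi> x = 0" using residue_eq_zero_iff[OF B(2)] assms unfolding val_maxideal_def by simp
  then have "\<pi> (1 + x) = 1" using residue_add[OF B] residue_one by simp
  with one_plus_in_val_units[OF assms] show ?thesis unfolding strict_unit_def by simp
qed

lemma sum_of_unit_squares_if_val_pos:
  assumes "CHAR('f) = 2"
    and sqrt: "\<forall>s. strict_unit val \<pi> s \<longrightarrow> (\<exists>r. r ^ 2 = s)"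
    and "0 < val x"
  shows "\<exists>a b. x = a ^ 2 + b ^ 2 \<and> a \<in> val_units val \<and> b \<in> val_units val"
proof -
  obtain r where r: "r ^ 2 = 1 + x"
    using sqrt strict_unit_one_plus[OF assms(3)] by blast
  obtain i where i: "i ^ 2 = (- 1 :: 'k)"
    using sqrt strict_unit_minus_one[OF assms(1)] by blast
  have "r \<in> val_units val" "i \<in> val_units val"
    using strict_unit_one_plus[OF assms(3)] strict_unit_minus_one[OF assms(1)] r i
    unfolding strict_unit_def by (metis square_in_val_units_iff)+
  moreover have "x = r ^ 2 + i ^ 2" using r i by simp
  ultimately show ?thesis by blast
qed

end

theorem mainTheorem18:
  fixes val :: "'k::field \<Rightarrow> 'g::linordered_ab_group_add"
    and \<pi> :: "'k \<Rightarrow> 'f::field"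
    and A :: "'k set"
  assumes "valuation val"
    and "residue_map val \<pi>"
    and "CHAR('f) = 2"
    and "\<forall>s. strict_unit val \<pi> s \<longrightarrow> (\<exists>r. r ^ 2 = s)"
    and "is_subring A"
    and "val_ring val \<subseteq> A"
  shows "\<forall>x. x \<noteq> 0 \<and> x \<notin> val_units val \<longrightarrow>
           (\<exists>u v. x = u ^ 2 + v ^ 2 \<and> u \<noteq> 0 \<and> v \<noteq> 0 \<and>
                  val u = min 0 (val x) \<and> val v = min 0 (val x) \<and>
                  (x \<in> A \<longrightarrow> u \<in> A \<and> v \<in> A))"
proof (intro allI impI)
  interpret residue_field val \<pi> using assms(1,2) by unfold_locales
  have units_in_A: "val_units val \<subseteq> A" using assms(6) unfolding val_ring_def val_units_def by auto
  fix x assume "x \<noteq> 0 \<and> x \<notin> val_units val"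
  then have x: "x \<noteq> 0" "val x < 0 \<or> 0 < val x" unfolding val_units_def by auto
  note sum_of_squares = sum_of_unit_squares_if_val_pos[OF assms(3,4)]
  show "\<exists>u v. x = u ^ 2 + v ^ 2 \<and> u \<noteq> 0 \<and> v \<noteq> 0 \<and>
              val u = min 0 (val x) \<and> val v = min 0 (val x) \<and> (x \<in> A \<longrightarrow> u \<in> A \<and> v \<in> A)"
  proof (cases "0 < val x")
    case True
    then obtain a b where "x = a ^ 2 + b ^ 2" "a \<in> val_units val" "b \<in> val_units val"
      using sum_of_squares by blast
    then show ?thesis using True units_in_A unfolding val_units_def by (intro exI) auto
  next
    case False
    then have "0 < val (inverse x)" using x by (simp add: val_inverse)
    then obtain a b where ab: "inverse x = a ^ 2 + b ^ 2" "a \<in> val_units val" "b \<in> val_units val"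
      using sum_of_squares by blast
    have "x = x ^ 2 * inverse x" using x(1) by (simp add: power2_eq_square)
    also have "\<dots> = (x * a) ^ 2 + (x * b) ^ 2" using ab(1) by (simp add: power_mult_distrib algebra_simps)
    finally have "x = (x * a) ^ 2 + (x * b) ^ 2" .
    moreover have "x \<in> A \<Longrightarrow> x * a \<in> A \<and> x * b \<in> A"
      using assms(5) ab units_in_A unfolding is_subring_def by blast
    ultimately show ?thesis using ab x False unfolding val_units_def
      by (intro exI[of _ "x * a"] exI[of _ "x * b"]) (auto simp: val_mult min_def)
  qed
qed

end
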